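(* Let $k\ge 2$ and let $G$ be a $k$-uniform hypergraph on $n\ge 2$ vertices whose degrees, listed in non-increasing order, are $d_1\ge d_2\ge\cdots\ge d_n$. Put $\Delta=d_1$ (maximum degree) and $\Delta'=d_2$ (second maximum degree), and assume $\Delta'\ge 1$. Let $0\le\alpha<1$ and \[h(t)=(1-\alpha)\Delta' t^{k}+\alpha(\Delta'-\Delta)t^{k-1}-(1-\alpha)\Delta .\] Define $\delta$ as follows: if $\alpha=0$, let $\delta=(\Delta/\Delta')^{1/k}$; if $0<\alpha<1$ and $\Delta=\Delta'$, let $\delta=1$; if $0<\alpha<1$ and $\Delta>\Delta'$, let $\delta$ be any root of $h(t)=0$ in the interval $((\Delta/\Delta')^{1/k},+\infty)$ (such a root exists). Then \[\rho_\alpha(G)\le \alpha\Delta+(1-\alpha)\Delta\,\delta^{-(k-1)}.\] Moreover, if $G$ is connected, equality holds if and only if either $G$ is regular, or $G\cong G'$, where $H$ is a regular $(k-1)$-uniform hypergraph on $n-1$ vertices, $v\notin V(H)$, $V(G')=V(H)\cup\{v\}$ and $E(G')=\{e\cup\{v\}: e\in E(H)\}$.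
   Context: Hypergraphs are finite, with edges being sets (no repeated edges). A hypergraph is $k$-uniform if every edge has exactly $k$ vertices. The degree $d_v$ of a vertex $v$ is the number of edges containing $v$; $G$ is regular if all vertices have the same degree. For a $k$-uniform hypergraph $G$ with vertex set $\{1,\dots,n\}$, the adjacency tensor $\mathcal A(G)$ is the order-$k$, dimension-$n$ tensor whose $(i_1,\dots,i_k)$-entry is $\frac{1}{(k-1)!}$ if $\{i_1,\dots,i_k\}\in E(G)$ and $0$ otherwise; $\mathcal D(G)$ is the diagonal order-$k$ tensor with $(i,\dots,i)$-entry $d_i$. For $0\le\alpha<1$, $\mathcal A_\alpha(G)=\alpha\mathcal D(G)+(1-\alpha)\mathcal A(G)$. For an order-$k$, dimension-$n$ tensor $\mathcal T$ and $x\in\mathbb C^n$, $(\mathcal Tx)_i=\sum_{i_2,\dots,i_k=1}^n\mathcal T_{ii_2\dots i_k}x_{i_2}\cdots x_{i_k}$; $\lambda\in\mathbb C$ is an eigenvalue of $\mathcal T$ if $\mathcal Tx=\lambda x^{[k-1]}$ for some nonzero $x$, where $x^{[k-1]}=(x_1^{k-1},\dots,x_n^{k-1})^\top$. The $\alpha$-spectral radius $\rho_\alpha(G)$ is the largest modulus of the eigenvalues of $\mathcal A_\alpha(G)$. A walk is an alternating sequence $(v_0,e_1,v_1,\dots,e_s,v_s)$ of vertices and edges with $v_{i-1},v_i\in e_i$ and $v_{i-1}\ne v_i$; a path is a walk with all vertices distinct and all edges distinct; $G$ is connected if any two vertices are joined by a path. *)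

theory Defs
  imports Complex_Main
begin

definition uniform_hypergraph :: "'a set \<Rightarrow> 'a set set \<Rightarrow> nat \<Rightarrow> bool" where
  "uniform_hypergraph V E k \<longleftrightarrow> finite V \<and> (\<forall>e\<in>E. e \<subseteq> V \<and> card e = k)"

definition hdeg :: "'a set set \<Rightarrow> 'a \<Rightarrow> nat" where
  "hdeg E v = card {e \<in> E. v \<in> e}"

definition hregular :: "'a set \<Rightarrow> 'a set set \<Rightarrow> bool" where
  "hregular V E \<longleftrightarrow> (\<forall>u\<in>V. \<forall>w\<in>V. hdeg E u = hdeg E w)"

definition hwalk :: "'a set set \<Rightarrow> 'a list \<Rightarrow> 'a set list \<Rightarrow> bool" where
  "hwalk E vs es \<longleftrightarrow> length vs = length es + 1 \<and>
     (\<forall>i<length es. es ! i \<in> E \<and> vs ! i \<in> es ! i \<and> vs ! Suc i \<in> es ! i \<and> vs ! i \<noteq> vs ! Suc i)"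

definition hpath :: "'a set set \<Rightarrow> 'a list \<Rightarrow> 'a set list \<Rightarrow> bool" where
  "hpath E vs es \<longleftrightarrow> hwalk E vs es \<and> distinct vs \<and> distinct es"

definition hconnected :: "'a set \<Rightarrow> 'a set set \<Rightarrow> bool" where
  "hconnected V E \<longleftrightarrow> (\<forall>u\<in>V. \<forall>w\<in>V. \<exists>vs es. hpath E vs es \<and> hd vs = u \<and> last vs = w)"

definition hyp_iso :: "'a set \<Rightarrow> 'a set set \<Rightarrow> 'b set \<Rightarrow> 'b set set \<Rightarrow> bool" where
  "hyp_iso V1 E1 V2 E2 \<longleftrightarrow> (\<exists>f. bij_betw f V1 V2 \<and> E2 = (\<lambda>e. f ` e) ` E1)"

text \<open>Tensors of order k and dimension n: functions on index lists (entries with indices in {0..<n}).\<close>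

definition tensor_apply :: "nat \<Rightarrow> nat \<Rightarrow> (nat list \<Rightarrow> complex) \<Rightarrow> (nat \<Rightarrow> complex) \<Rightarrow> nat \<Rightarrow> complex" where
  "tensor_apply n k T x i =
     (\<Sum>is\<in>{is. length is = k - 1 \<and> set is \<subseteq> {..<n}}. T (i # is) * prod_list (map x is))"

definition tensor_eigenvalue :: "nat \<Rightarrow> nat \<Rightarrow> (nat list \<Rightarrow> complex) \<Rightarrow> complex \<Rightarrow> bool" where
  "tensor_eigenvalue n k T lam \<longleftrightarrow>
     (\<exists>x :: nat \<Rightarrow> complex. (\<exists>i<n. x i \<noteq> 0) \<and>
        (\<forall>i<n. tensor_apply n k T x i = lam * x i ^ (k - 1)))"

definition tensor_spectral_radius :: "nat \<Rightarrow> nat \<Rightarrow> (nat list \<Rightarrow> complex) \<Rightarrow> real" where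
  "tensor_spectral_radius n k T = Sup {cmod lam | lam. tensor_eigenvalue n k T lam}"

definition adj_tensor :: "nat \<Rightarrow> nat set set \<Rightarrow> nat list \<Rightarrow> real" where
  "adj_tensor k E is = (if set is \<in> E then 1 / fact (k - 1) else 0)"

definition deg_tensor :: "nat set set \<Rightarrow> nat list \<Rightarrow> real" where
  "deg_tensor E is = (if (\<forall>j\<in>set is. j = hd is) then real (hdeg E (hd is)) else 0)"

definition A_alpha :: "real \<Rightarrow> nat \<Rightarrow> nat set set \<Rightarrow> nat list \<Rightarrow> complex" where
  "A_alpha \<alpha> k E is = complex_of_real (\<alpha> * deg_tensor E is + (1 - \<alpha>) * adj_tensor k E is)"

definition rho_alpha :: "real \<Rightarrow> nat \<Rightarrow> nat \<Rightarrow> nat set set \<Rightarrow> real" where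
  "rho_alpha \<alpha> n k E = tensor_spectral_radius n k (A_alpha \<alpha> k E)"

text \<open>Degrees in non-increasing order d_1 \<ge> ... \<ge> d_n (0-indexed list).\<close>
definition sorted_degrees :: "nat \<Rightarrow> nat set set \<Rightarrow> nat list" where
  "sorted_degrees n E = rev (sort (map (hdeg E) [0..<n]))"

definition hpoly :: "real \<Rightarrow> nat \<Rightarrow> real \<Rightarrow> real \<Rightarrow> real \<Rightarrow> real" where
  "hpoly \<alpha> k D D' t = (1 - \<alpha>) * D' * t ^ k + \<alpha> * (D' - D) * t ^ (k - 1) - (1 - \<alpha>) * D"

end

theory Submission
  imports Defs "HOL-Combinatorics.Multiset_Permutations" "HOL-Analysis.Analysis"
    "Jordan_Normal_Form.Spectral_Radius"
begin

(* Let w be a vertex of maximum degree and scale its coordinate by \<delta> \<ge> 1 (a weighted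
   Gershgorin argument). If x is an eigenvector for \<lambda> and i maximises M = |x_i| / s_i, where
   s_w = \<delta> and s_j = 1 otherwise, the eigen-equation at i gives
     |\<lambda>| \<le> \<alpha> d_i + (1-\<alpha>) T_i / s_i^(k-1),   T_i = \<Sum>{e\<ni>i} \<Prod>{j\<in>e-i} s_j.
   At w the right-hand side is \<alpha>\<Delta> + (1-\<alpha>)\<Delta>/\<delta>^(k-1); at any other vertex it is at most
   \<alpha>\<Delta>' + (1-\<alpha>)\<Delta>'\<delta>, and h(\<delta>) = 0 says precisely that these two numbers agree.
   If |\<lambda>| attains the bound, connectivity propagates |x_j| = s_j M to all vertices, all estimates
   become tight, and either \<delta> = 1 and G is regular, or \<delta> > 1, every edge contains w and all other
   degrees equal \<Delta>' (a cone over a regular (k-1)-graph). Conversely, in both cases s itself is an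
   eigenvector for the bound. The spectral radius is attained because normalised eigenpairs form a
   compact set. *)

lemma uniform_hypergraphD:
  fixes E :: "nat set set"
  assumes "uniform_hypergraph {0..<n} E k"
  shows "finite E" "\<And>e. e \<in> E \<Longrightarrow> e \<subseteq> {0..<n}" "\<And>e. e \<in> E \<Longrightarrow> card e = k"
    "\<And>e. e \<in> E \<Longrightarrow> finite e"
proof -
  have "E \<subseteq> Pow {0..<n}" using assms unfolding uniform_hypergraph_def by auto
  thus "finite E" by (meson finite_Pow_iff finite_atLeastLessThan finite_subset)
  show "\<And>e. e \<in> E \<Longrightarrow> e \<subseteq> {0..<n}" "\<And>e. e \<in> E \<Longrightarrow> card e = k"
    using assms unfolding uniform_hypergraph_def by auto
  show "\<And>e. e \<in> E \<Longrightarrow> finite e" using assms unfolding uniform_hypergraph_def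
    by (meson finite_atLeastLessThan finite_subset)
qed

lemma prod_mono_inv:
  fixes f g :: "'a \<Rightarrow> real"
  assumes "finite A" "\<And>x. x \<in> A \<Longrightarrow> 0 \<le> f x \<and> f x \<le> g x" "\<And>x. x \<in> A \<Longrightarrow> 0 < g x"
    "prod f A = prod g A" "x \<in> A"
  shows "f x = g x"
proof (rule ccontr)
  assume "f x \<noteq> g x"
  hence "f x < g x" using assms(2)[OF assms(5)] by auto
  hence "prod f A < prod g A" using prod_mono_strict[of x A f g] assms by auto
  thus False using assms(4) by simp
qed

subsection \<open>The tensor \<open>\<A>\<^sub>\<alpha>\<close> applied to a vector\<close>

lemma tensor_apply_index_lists_finite: "finite {is. length is = k - 1 \<and> set is \<subseteq> {..<n::nat}}"
  by (metis (no_types, lifting) Collect_cong finite_lessThan finite_lists_length_eq)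

lemma sum_deg_tensor:
  fixes x :: "nat \<Rightarrow> complex"
  assumes i: "i < n"
  shows "(\<Sum>is\<in>{is. length is = k - 1 \<and> set is \<subseteq> {..<n}}.
            of_real (deg_tensor E (i # is)) * prod_list (map x is))
       = of_real (real (hdeg E i)) * x i ^ (k-1)"
  (is "(\<Sum>is\<in>?L. _) = _")
proof -
  have "(\<Sum>is\<in>?L. of_real (deg_tensor E (i # is)) * prod_list (map x is))
      = (\<Sum>is\<in>?L. if is = replicate (k-1) i then of_real (real (hdeg E i)) * x i ^ (k-1) else 0)"
  proof (rule sum.cong[OF refl])
    fix "is" assume "is \<in> ?L"
    hence len: "length is = k - 1" by auto
    show "of_real (deg_tensor E (i # is)) * prod_list (map x is) =
      (if is = replicate (k-1) i then of_real (real (hdeg E i)) * x i ^ (k-1) else 0)"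
    proof (cases "\<forall>j\<in>set is. j = i")
      case True
      hence "is = replicate (k-1) i" using replicate_length_same[OF True] len by simp
      thus ?thesis by (simp add: deg_tensor_def prod_list_replicate)
    next
      case False
      hence "is \<noteq> replicate (k-1) i" by auto
      thus ?thesis using False by (auto simp add: deg_tensor_def)
    qed
  qed
  also have "\<dots> = of_real (real (hdeg E i)) * x i ^ (k-1)"
    using i tensor_apply_index_lists_finite by (simp add: sum.delta' set_replicate_conv_if)
  finally show ?thesis .
qed

text \<open>The index lists selected by an edge \<open>e \<ni> i\<close> are the \<open>(k-1)!\<close> orderings of \<open>e - {i}\<close>,
  which cancels the normalisation \<open>1/(k-1)!\<close> of the adjacency tensor.\<close>

lemma index_lists_of_edges:
  fixes E :: "nat set set"
  assumes k: "k \<ge> 2" and G: "uniform_hypergraph {0..<n} E k"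
  shows "{is\<in>{is. length is = k - 1 \<and> set is \<subseteq> {..<n}}. set (i # is) \<in> E}
       = (\<Union>e\<in>{e\<in>E. i\<in>e}. permutations_of_set (e - {i}))"
proof (intro equalityI subsetI)
  fix "is" assume "is \<in> {is\<in>{is. length is = k - 1 \<and> set is \<subseteq> {..<n}}. set (i # is) \<in> E}"
  hence len: "length is = k - 1" and eE: "insert i (set is) \<in> E" by auto
  have "card (insert i (set is)) = k" using uniform_hypergraphD(3)[OF G eE] .
  moreover have "card (insert i (set is)) \<le> Suc (card (set is))" by (simp add: card_insert_le_m1)
  moreover have "card (set is) \<le> length is" by (rule card_length)
  ultimately have ni: "i \<notin> set is" and "card (set is) = length is"
    using len k by (auto simp: card_insert_if split: if_splits)
  hence "distinct is" by (simp add: card_distinct)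
  moreover have "set is = insert i (set is) - {i}" using ni by auto
  ultimately show "is \<in> (\<Union>e\<in>{e\<in>E. i\<in>e}. permutations_of_set (e - {i}))"
    unfolding permutations_of_set_def using eE by blast
next
  fix "is" assume "is \<in> (\<Union>e\<in>{e\<in>E. i\<in>e}. permutations_of_set (e - {i}))"
  then obtain e where e: "e \<in> E" "i \<in> e" and s: "set is = e - {i}" and d: "distinct is"
    unfolding permutations_of_set_def by auto
  have "length is = card (e - {i})" using d s by (metis distinct_card)
  also have "\<dots> = k - 1" using uniform_hypergraphD[OF G] e by simp
  finally show "is \<in> {is\<in>{is. length is = k - 1 \<and> set is \<subseteq> {..<n}}. set (i # is) \<in> E}"
    using s uniform_hypergraphD(2)[OF G e(1)] e by (auto simp: insert_absorb)
qed

lemma sum_adj_tensor: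
  fixes E :: "nat set set" and x :: "nat \<Rightarrow> complex"
  assumes k: "k \<ge> 2" and G: "uniform_hypergraph {0..<n} E k"
  shows "(\<Sum>is\<in>{is. length is = k - 1 \<and> set is \<subseteq> {..<n}}.
            of_real (adj_tensor k E (i # is)) * prod_list (map x is))
       = (\<Sum>e\<in>{e\<in>E. i\<in>e}. \<Prod>j\<in>e-{i}. x j)"
  (is "(\<Sum>is\<in>?L. _) = (\<Sum>e\<in>?Ei. _)")
proof -
  define c where "c = (of_real (1 / fact (k-1)) :: complex)"
  have "(\<Sum>is\<in>?L. of_real (adj_tensor k E (i # is)) * prod_list (map x is))
      = (\<Sum>is\<in>?L. if set (i # is) \<in> E then c * prod_list (map x is) else 0)"
    by (rule sum.cong[OF refl]) (simp add: adj_tensor_def c_def)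
  also have "\<dots> = (\<Sum>is\<in>{is\<in>?L. set (i # is) \<in> E}. c * prod_list (map x is))"
    by (rule sum.inter_filter[OF tensor_apply_index_lists_finite, symmetric])
  also have "\<dots> = (\<Sum>e\<in>?Ei. \<Sum>is\<in>permutations_of_set (e - {i}). c * prod_list (map x is))"
    unfolding index_lists_of_edges[OF k G]
    by (rule sum.UNION_disjoint) (use uniform_hypergraphD(1)[OF G] in \<open>simp_all, auto simp: permutations_of_set_def\<close>)
  also have "\<dots> = (\<Sum>e\<in>?Ei. \<Prod>j\<in>e-{i}. x j)"
  proof (rule sum.cong[OF refl])
    fix e assume "e \<in> ?Ei"
    hence card: "card (e - {i}) = k - 1" and fin: "finite (e - {i})"
      using uniform_hypergraphD[OF G] by simp_all
    have "(\<Sum>is\<in>permutations_of_set (e - {i}). c * prod_list (map x is))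
        = (\<Sum>is\<in>permutations_of_set (e - {i}). c * (\<Prod>j\<in>e-{i}. x j))"
      by (rule sum.cong[OF refl])
        (auto simp: permutations_of_set_def prod.distinct_set_conv_list[symmetric])
    also have "\<dots> = (of_nat (fact (k-1)) * c) * (\<Prod>j\<in>e-{i}. x j)"
      using card fin by (simp add: mult.assoc)
    also have "of_nat (fact (k-1)) * c = 1" unfolding c_def by (simp add: field_simps)
    finally show "(\<Sum>is\<in>permutations_of_set (e - {i}). c * prod_list (map x is))
        = (\<Prod>j\<in>e-{i}. x j)" by simp
  qed
  finally show ?thesis .
qed

lemma tensor_apply_A_alpha:
  assumes k: "k \<ge> 2" and G: "uniform_hypergraph {0..<n} E k" and i: "i < n"
  shows "tensor_apply n k (A_alpha \<alpha> k E) x i =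
     of_real (\<alpha> * real (hdeg E i)) * x i ^ (k-1)
     + of_real (1-\<alpha>) * (\<Sum>e\<in>{e\<in>E. i\<in>e}. \<Prod>j\<in>e-{i}. x j)"
proof -
  have split: "A_alpha \<alpha> k E (i # is) * prod_list (map x is) =
      of_real \<alpha> * (of_real (deg_tensor E (i # is)) * prod_list (map x is))
      + of_real (1-\<alpha>) * (of_real (adj_tensor k E (i # is)) * prod_list (map x is))" for "is"
    unfolding A_alpha_def by (simp add: algebra_simps)
  show ?thesis
    unfolding tensor_apply_def split sum.distrib sum_distrib_left[symmetric]
      sum_deg_tensor[OF i] sum_adj_tensor[OF k G]
    by simp
qed

lemma real_eigenvector_imp_eigenvalue:
  fixes E :: "nat set set" and x :: "nat \<Rightarrow> real"
  assumes k: "k \<ge> 2" and G: "uniform_hypergraph {0..<n} E k"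
    and eq: "\<And>i. i < n \<Longrightarrow> \<alpha> * real (hdeg E i) * x i ^ (k-1)
        + (1-\<alpha>) * (\<Sum>e\<in>{e\<in>E. i\<in>e}. \<Prod>l\<in>e-{i}. x l) = lam * x i ^ (k-1)"
    and i0: "i0 < n" "x i0 \<noteq> 0"
  shows "tensor_eigenvalue n k (A_alpha \<alpha> k E) (of_real lam)"
  unfolding tensor_eigenvalue_def
proof (intro exI[of _ "\<lambda>j. of_real (x j)"] conjI allI impI)
  show "\<exists>i<n. complex_of_real (x i) \<noteq> 0" using i0 by auto
  fix i assume i: "i < n"
  have "tensor_apply n k (A_alpha \<alpha> k E) (\<lambda>j. of_real (x j)) i
      = of_real (\<alpha> * real (hdeg E i) * x i ^ (k-1)
        + (1-\<alpha>) * (\<Sum>e\<in>{e\<in>E. i\<in>e}. \<Prod>l\<in>e-{i}. x l))"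
    unfolding tensor_apply_A_alpha[OF k G i] by simp
  also have "\<dots> = of_real lam * (of_real (x i)) ^ (k-1)" unfolding eq[OF i] by simp
  finally show "tensor_apply n k (A_alpha \<alpha> k E) (\<lambda>j. of_real (x j)) i
      = of_real lam * (of_real (x i)) ^ (k-1)" .
qed

subsection \<open>Existence and attainment of the spectral radius\<close>

lemma tensor_apply_cong:
  assumes "\<And>j. j < n \<Longrightarrow> x j = y j"
  shows "tensor_apply n k T x i = tensor_apply n k T y i"
  unfolding tensor_apply_def
proof (rule sum.cong[OF refl])
  fix "is" assume "is \<in> {is. length is = k - 1 \<and> set is \<subseteq> {..<n}}"
  hence "map x is = map y is" using assms by (auto intro: map_cong)
  thus "T (i # is) * prod_list (map x is) = T (i # is) * prod_list (map y is)"
    by (simp del: map_eq_conv)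
qed

lemma tensor_apply_homogeneous:
  "tensor_apply n k T (\<lambda>j. c * x j) i = c ^ (k-1) * tensor_apply n k T x i"
  unfolding tensor_apply_def sum_distrib_left
proof (rule sum.cong[OF refl])
  fix "is" assume "is \<in> {is. length is = k - 1 \<and> set is \<subseteq> {..<n}}"
  moreover have "prod_list (map (\<lambda>j. c * x j) is) = c ^ length is * prod_list (map x is)"
    by (induction "is") (auto simp: algebra_simps)
  ultimately show "T (i # is) * prod_list (map (\<lambda>j. c * x j) is)
      = c ^ (k - 1) * (T (i # is) * prod_list (map x is))"
    by (simp add: algebra_simps)
qed

lemma continuous_on_tensor_apply: "continuous_on UNIV (\<lambda>z. tensor_apply n k T z i)"
proof -
  have "continuous_on UNIV (\<lambda>z::nat \<Rightarrow> complex. prod_list (map z is))" for "is"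
    by (induction "is") (auto intro!: continuous_intros continuous_on_mult)
  thus ?thesis unfolding tensor_apply_def
    by (intro continuous_on_sum continuous_on_mult continuous_on_const)
qed

text \<open>An eigenpair \<open>(x, \<lambda>)\<close> with \<open>\<Sum>|x\<^sub>i| = 1\<close> and \<open>|\<lambda>| \<le> r\<close> is stored as a single point
  of \<open>nat \<Rightarrow> complex\<close>: coordinates below \<open>n\<close> hold \<open>x\<close>, coordinate \<open>n\<close> holds \<open>\<lambda>\<close>.\<close>

definition normalized_eigenpairs :: "nat \<Rightarrow> nat \<Rightarrow> (nat list \<Rightarrow> complex) \<Rightarrow> real \<Rightarrow> (nat \<Rightarrow> complex) set"
  where "normalized_eigenpairs n k T r =
    Pi UNIV (\<lambda>i. if i < n then cball 0 1 else if i = n then cball 0 r else {0})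
    \<inter> {z. (\<Sum>i<n. cmod (z i)) = 1}
    \<inter> (\<Inter>i\<in>{..<n}. {z. tensor_apply n k T z i = z n * z i ^ (k-1)})"

lemma compact_normalized_eigenpairs: "compact (normalized_eigenpairs n k T r)"
proof -
  have "compactin (product_topology (\<lambda>_. euclidean) UNIV)
      (Pi\<^sub>E UNIV (\<lambda>i. if i < n then cball (0::complex) 1 else if i = n then cball 0 r else {0}))"
    by (subst compactin_PiE) (auto simp: compactin_euclidean_iff)
  hence "compact (Pi UNIV (\<lambda>i. if i < n then cball (0::complex) 1 else if i = n then cball 0 r else {0}))"
    unfolding euclidean_product_topology PiE_UNIV_domain compactin_euclidean_iff .
  moreover have "closed ({z. (\<Sum>i<n. cmod (z i)) = 1}
      \<inter> (\<Inter>i\<in>{..<n}. {z::nat\<Rightarrow>complex. tensor_apply n k T z i = z n * z i ^ (k-1)}))"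
  proof (intro closed_Int closed_INT ballI closed_Collect_eq)
    show "continuous_on UNIV (\<lambda>z::nat\<Rightarrow>complex. \<Sum>i<n. cmod (z i))"
      by (intro continuous_intros continuous_on_norm continuous_on_product_coordinates)
    fix i
    show "continuous_on UNIV (\<lambda>z. tensor_apply n k T z i)" by (rule continuous_on_tensor_apply)
    show "continuous_on UNIV (\<lambda>z::nat\<Rightarrow>complex. z n * z i ^ (k - 1))"
      by (intro continuous_intros continuous_on_mult continuous_on_power
          continuous_on_product_coordinates)
  qed (auto intro: continuous_on_const)
  ultimately show ?thesis
    unfolding normalized_eigenpairs_def Int_assoc by (rule compact_Int_closed)
qed

lemma normalized_eigenpair_exists:
  assumes ev: "tensor_eigenvalue n k T lam" and bd: "cmod lam \<le> r"
  shows "\<exists>z\<in>normalized_eigenpairs n k T r. z n = lam"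
proof -
  from ev obtain x i0 where x: "\<And>i. i < n \<Longrightarrow> tensor_apply n k T x i = lam * x i ^ (k-1)"
    and i0: "i0 < n" "x i0 \<noteq> 0" unfolding tensor_eigenvalue_def by blast
  define c where "c = (\<Sum>i<n. cmod (x i))"
  have le_c: "cmod (x i) \<le> c" if "i < n" for i
    unfolding c_def using member_le_sum[of i "{..<n}" "\<lambda>i. cmod (x i)"] that by simp
  have cpos: "c > 0" using le_c[OF i0(1)] i0(2) by (meson less_le_trans zero_less_norm_iff)
  define z where "z i = (if i < n then x i / of_real c else if i = n then lam else 0)" for i
  have "z \<in> Pi UNIV (\<lambda>i. if i < n then cball 0 1 else if i = n then cball 0 r else {0})"
    using le_c cpos bd by (auto simp: z_def norm_divide divide_le_eq)
  moreover have "(\<Sum>i<n. cmod (z i)) = 1"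
  proof -
    have "(\<Sum>i<n. cmod (z i)) = (\<Sum>i<n. cmod (x i) / c)"
      by (rule sum.cong[OF refl]) (use cpos in \<open>simp add: z_def norm_divide\<close>)
    thus ?thesis using cpos by (simp add: sum_divide_distrib[symmetric] c_def)
  qed
  moreover have "tensor_apply n k T z i = z n * z i ^ (k-1)" if i: "i < n" for i
  proof -
    have "tensor_apply n k T z i = tensor_apply n k T (\<lambda>j. (1 / of_real c) * x j) i"
      by (rule tensor_apply_cong) (simp add: z_def)
    also have "\<dots> = (1 / of_real c) ^ (k-1) * (lam * x i ^ (k-1))"
      unfolding tensor_apply_homogeneous x[OF i] ..
    also have "\<dots> = z n * z i ^ (k-1)" using i by (simp add: z_def power_divide)
    finally show ?thesis .
  qed
  ultimately show ?thesis unfolding normalized_eigenpairs_def by (intro bexI[of _ z]) (auto simp: z_def)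
qed

lemma normalized_eigenpair_eigenvalue:
  assumes "z \<in> normalized_eigenpairs n k T r"
  shows "tensor_eigenvalue n k T (z n)"
proof -
  have "(\<Sum>i<n. cmod (z i)) = 1"
    and eq: "\<And>i. i < n \<Longrightarrow> tensor_apply n k T z i = z n * z i ^ (k-1)"
    using assms unfolding normalized_eigenpairs_def by auto
  hence "\<exists>i<n. z i \<noteq> 0" by (metis (no_types, lifting) lessThan_iff norm_zero sum.neutral zero_neq_one)
  thus ?thesis unfolding tensor_eigenvalue_def using eq by blast
qed

lemma tensor_spectral_radius_attained:
  assumes bd: "\<And>lam. tensor_eigenvalue n k T lam \<Longrightarrow> cmod lam \<le> r"
    and ne: "tensor_eigenvalue n k T lam0"
  obtains lam where "tensor_eigenvalue n k T lam" "cmod lam = tensor_spectral_radius n k T"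
    "\<And>\<mu>. tensor_eigenvalue n k T \<mu> \<Longrightarrow> cmod \<mu> \<le> tensor_spectral_radius n k T"
proof -
  let ?C = "normalized_eigenpairs n k T r"
  have "continuous_on ?C (\<lambda>z. cmod (z n))"
    by (intro continuous_on_norm continuous_on_subset[OF continuous_on_product_coordinates]) auto
  moreover have "?C \<noteq> {}" using normalized_eigenpair_exists[OF ne bd[OF ne]] by auto
  ultimately obtain m where "m \<in> (\<lambda>z. cmod (z n)) ` ?C" "\<forall>t\<in>(\<lambda>z. cmod (z n)) ` ?C. t \<le> m"
    using compact_attains_sup[OF compact_continuous_image[OF _ compact_normalized_eigenpairs]] by blast
  then obtain z0 where z0: "z0 \<in> ?C" and zmax: "\<And>z. z \<in> ?C \<Longrightarrow> cmod (z n) \<le> cmod (z0 n)"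
    by auto
  have ev0: "tensor_eigenvalue n k T (z0 n)" using normalized_eigenpair_eigenvalue[OF z0] .
  have le: "cmod \<mu> \<le> cmod (z0 n)" if "tensor_eigenvalue n k T \<mu>" for \<mu>
    using normalized_eigenpair_exists[OF that bd[OF that]] zmax by auto
  have "tensor_spectral_radius n k T = cmod (z0 n)"
    unfolding tensor_spectral_radius_def by (rule cSup_eq_maximum) (use ev0 le in auto)
  thus ?thesis using that[OF ev0] le by simp
qed

text \<open>For \<open>k \<ge> 3\<close> a unit vector is a (degenerate) eigenvector of \<open>\<A>\<^sub>\<alpha>\<close>: every edge through
  a vertex meets a second vertex outside the support.\<close>

lemma A_alpha_eigenvalue_exists_order_ge_3:
  fixes E :: "nat set set"
  assumes k: "k \<ge> 3" and G: "uniform_hypergraph {0..<n} E k" and n: "n \<ge> 1"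
  shows "\<exists>lam. tensor_eigenvalue n k (A_alpha \<alpha> k E) lam"
proof -
  define x :: "nat \<Rightarrow> complex" where "x j = (if j = 0 then 1 else 0)" for j
  have link_zero: "(\<Prod>l\<in>e-{j}. x l) = 0" if e: "e \<in> E" for e j
  proof -
    have "card {j, 0::nat} \<le> 2" by (simp add: card_insert_if)
    hence "k - 2 \<le> card (e - {j, 0})"
      using diff_card_le_card_Diff[of "{j, 0}" e] uniform_hypergraphD(3)[OF G e] by simp
    hence "card (e - {j, 0}) > 0" using k by linarith
    hence "e - {j, 0} \<noteq> {}" by force
    then obtain l where "l \<in> e - {j}" "l \<noteq> 0" by auto
    thus ?thesis using uniform_hypergraphD(4)[OF G e] by (intro prod_zero) (auto simp: x_def)
  qed
  have "tensor_apply n k (A_alpha \<alpha> k E) x i = of_real (\<alpha> * real (hdeg E 0)) * x i ^ (k-1)"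
    if i: "i < n" for i
  proof -
    have "(\<Sum>e\<in>{e\<in>E. i\<in>e}. \<Prod>j\<in>e-{i}. x j) = 0" using link_zero by (intro sum.neutral) auto
    moreover have "x i ^ (k-1) = (if i = 0 then 1 else 0)" using k by (simp add: x_def)
    ultimately show ?thesis
      using k tensor_apply_A_alpha[OF _ G i, of \<alpha> x] by (simp add: x_def)
  qed
  moreover have "x 0 \<noteq> 0" by (simp add: x_def)
  ultimately show ?thesis unfolding tensor_eigenvalue_def using n by force
qed

lemma tensor_eigenvalue_exists_order_2:
  fixes T :: "nat list \<Rightarrow> complex"
  assumes n: "n \<ge> 1"
  shows "\<exists>lam. tensor_eigenvalue n 2 T lam"
proof -
  define M where "M = mat n n (\<lambda>(i,j). T [i,j])"
  have M: "M \<in> carrier_mat n n" unfolding M_def by simp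
  from spectrum_non_empty[OF M] n obtain lam where "eigenvalue M lam"
    unfolding spectrum_def by auto
  then obtain v where v: "v \<in> carrier_vec n" "v \<noteq> 0\<^sub>v n" "M *\<^sub>v v = lam \<cdot>\<^sub>v v"
    unfolding eigenvalue_def eigenvector_def using M by auto
  have lists: "{is. length is = 2 - 1 \<and> set is \<subseteq> {..<n}} = (\<lambda>j. [j]) ` {..<n}"
    by (auto simp: length_Suc_conv)
  have "tensor_apply n 2 T (\<lambda>j. v $ j) i = lam * (v $ i) ^ (2-1)" if i: "i < n" for i
  proof -
    have "tensor_apply n 2 T (\<lambda>j. v $ j) i = (\<Sum>j<n. T [i,j] * v $ j)"
      unfolding tensor_apply_def lists by (subst sum.reindex) (auto simp: inj_on_def)
    also have "\<dots> = (M *\<^sub>v v) $ i"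
      using i v(1) by (auto simp: M_def scalar_prod_def intro!: sum.cong)
    finally show ?thesis using v(3) i v(1) by simp
  qed
  moreover have "\<exists>i<n. v $ i \<noteq> 0" using v(1,2) by (metis eq_vecI carrier_vecD index_zero_vec)
  ultimately show ?thesis unfolding tensor_eigenvalue_def by blast
qed

lemma A_alpha_has_eigenvalue:
  assumes "k \<ge> 2" "uniform_hypergraph {0..<n} E k" "n \<ge> 1"
  obtains lam where "tensor_eigenvalue n k (A_alpha \<alpha> k E) lam"
  using assms A_alpha_eigenvalue_exists_order_ge_3[of k n E \<alpha>]
    tensor_eigenvalue_exists_order_2[of n "A_alpha \<alpha> k E"]
  by (cases "k = 2") auto

subsection \<open>Degrees, connectivity and cones\<close>

lemma rev_sort_first_second:
  fixes xs :: "nat list"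
  assumes len: "length xs \<ge> 2"
  defines "L \<equiv> rev (sort xs)"
  shows "\<exists>p q. p < length xs \<and> q < length xs \<and> p \<noteq> q \<and> xs!p = L!0 \<and> xs!q = L!1
     \<and> (\<forall>i<length xs. xs!i \<le> L!0) \<and> (\<forall>i<length xs. i \<noteq> p \<longrightarrow> xs!i \<le> L!1)"
proof -
  have "mset L = mset xs" unfolding L_def by simp
  then obtain \<pi> where pi: "\<pi> permutes {..<length xs}" and pl: "permute_list \<pi> xs = L"
    by (metis mset_eq_permutation)
  have Lnth: "L ! j = xs ! (\<pi> j)" if "j < length xs" for j
    using pl permute_list_nth[OF pi that] by simp
  have antimono: "L ! j \<le> L ! i" if "i \<le> j" "j < length xs" for i j
  proof -
    have "L ! j = sort xs ! (length xs - Suc j)" "L ! i = sort xs ! (length xs - Suc i)"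
      unfolding L_def using that by (auto simp: rev_nth)
    thus ?thesis using sorted_nth_mono[of "sort xs" "length xs - Suc j" "length xs - Suc i"] that
      by simp
  qed
  have preimage: "\<exists>j<length xs. \<pi> j = i" if "i < length xs" for i
  proof -
    have "i \<in> \<pi> ` {..<length xs}" using permutes_image[OF pi] that by simp
    thus ?thesis by auto
  qed
  have image: "\<pi> j < length xs" if "j < length xs" for j
    using permutes_in_image[OF pi] that by simp
  show ?thesis
  proof (intro exI conjI allI impI)
    show "\<pi> 0 < length xs" "\<pi> 1 < length xs"
      using image[of 0] image[of 1] len by (auto simp del: length_greater_0_conv)
    show "\<pi> 0 \<noteq> \<pi> 1" using permutes_inj[OF pi] by (metis inj_eq zero_neq_one)
    show "xs ! \<pi> 0 = L ! 0" "xs ! \<pi> 1 = L ! 1"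
      using Lnth[of 0] Lnth[of 1] len by (auto simp del: length_greater_0_conv)
  next
    fix i assume "i < length xs"
    then obtain j where "j < length xs" "\<pi> j = i" using preimage by blast
    thus "xs ! i \<le> L ! 0" using antimono[of 0 j] Lnth by auto
  next
    fix i assume "i < length xs" and ne: "i \<noteq> \<pi> 0"
    then obtain j where j: "j < length xs" "\<pi> j = i" using preimage by blast
    hence "j \<noteq> 0" using ne by metis
    thus "xs ! i \<le> L ! 1" using antimono[of 1 j] j Lnth by auto
  qed
qed

lemma sorted_degrees_witnesses:
  assumes "n \<ge> 2"
  obtains p q where "p < n" "q < n" "p \<noteq> q"
    "hdeg E p = sorted_degrees n E ! 0" "hdeg E q = sorted_degrees n E ! 1"
    "\<And>i. i < n \<Longrightarrow> hdeg E i \<le> sorted_degrees n E ! 0"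
    "\<And>i. i < n \<Longrightarrow> i \<noteq> p \<Longrightarrow> hdeg E i \<le> sorted_degrees n E ! 1"
  using rev_sort_first_second[of "map (hdeg E) [0..<n]"] assms
  unfolding sorted_degrees_def by auto

lemma hdeg_image:
  assumes inj: "inj_on f V" and sub: "\<And>e. e \<in> E \<Longrightarrow> e \<subseteq> V" and j: "j \<in> V"
  shows "hdeg ((\<lambda>e. f ` e) ` E) (f j) = hdeg E j"
proof -
  have "{e'\<in>(\<lambda>e. f ` e) ` E. f j \<in> e'} = (\<lambda>e. f ` e) ` {e\<in>E. j\<in>e}"
    using inj_on_image_mem_iff[OF inj] sub j by blast
  moreover have "inj_on (\<lambda>e. f ` e) {e\<in>E. j\<in>e}"
    by (rule inj_on_subset[OF inj_on_image_Pow[OF inj]]) (use sub in auto)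
  ultimately show ?thesis unfolding hdeg_def by (simp add: card_image)
qed

lemma hconnected_edge_closed:
  assumes con: "hconnected V E" and "i \<in> V" "u \<in> V" and i: "i \<in> S"
    and closed: "\<And>l e j. l \<in> S \<Longrightarrow> e \<in> E \<Longrightarrow> l \<in> e \<Longrightarrow> j \<in> e \<Longrightarrow> j \<in> S"
  shows "u \<in> S"
proof -
  obtain vs es where p: "hwalk E vs es" "hd vs = i" "last vs = u"
    using con \<open>i \<in> V\<close> \<open>u \<in> V\<close> unfolding hconnected_def hpath_def by blast
  have len: "length vs = length es + 1"
    and step: "\<And>m. m < length es \<Longrightarrow> es ! m \<in> E \<and> vs ! m \<in> es ! m \<and> vs ! Suc m \<in> es ! m"
    using p(1) unfolding hwalk_def by auto
  have "vs ! m \<in> S" if "m < length vs" for m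
    using that
  proof (induction m)
    case 0
    thus ?case using p(2) i hd_conv_nth[of vs] by auto
  next
    case (Suc m)
    thus ?case using closed step[of m] len by auto
  qed
  moreover have "last vs = vs ! (length vs - 1)" using len by (intro last_conv_nth) auto
  ultimately show ?thesis using p(3) len by auto
qed

lemma cone_over_link:
  fixes E :: "nat set set"
  assumes G: "uniform_hypergraph {0..<n} E k" and w: "w < n" and cone: "\<And>e. e \<in> E \<Longrightarrow> w \<in> e"
  defines "VH \<equiv> {0..<n} - {w}" and "EH \<equiv> (\<lambda>e. e - {w}) ` E"
  shows "uniform_hypergraph VH EH (k - 1)" "card VH = n - 1" "w \<notin> VH"
    "\<And>u. u \<noteq> w \<Longrightarrow> hdeg EH u = hdeg E u"
    "hyp_iso {0..<n} E (insert w VH) {e \<union> {w} | e. e \<in> EH}"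
proof -
  show "uniform_hypergraph VH EH (k - 1)" unfolding uniform_hypergraph_def VH_def EH_def
    using uniform_hypergraphD[OF G] cone by auto
  show "card VH = n - 1" "w \<notin> VH" unfolding VH_def using w by auto
  show "hdeg EH u = hdeg E u" if u: "u \<noteq> w" for u
  proof -
    have "inj_on (\<lambda>e. e - {w}) E" by (rule inj_onI) (metis cone insert_Diff)
    moreover have "{e\<in>EH. u\<in>e} = (\<lambda>e. e - {w}) ` {e\<in>E. u\<in>e}" unfolding EH_def using u by auto
    ultimately show ?thesis unfolding hdeg_def by (simp add: card_image inj_on_subset)
  qed
  have "{e \<union> {w} | e. e \<in> EH} = E"
  proof (intro equalityI subsetI)
    fix x assume "x \<in> {e \<union> {w} | e. e \<in> EH}"
    then obtain e where "e \<in> E" "x = (e - {w}) \<union> {w}" unfolding EH_def by auto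
    thus "x \<in> E" using cone by (metis Un_insert_right insert_Diff sup_bot.right_neutral)
  next
    fix x assume "x \<in> E"
    thus "x \<in> {e \<union> {w} | e. e \<in> EH}" unfolding EH_def using cone by blast
  qed
  moreover have "insert w VH = {0..<n}" unfolding VH_def using w by auto
  ultimately show "hyp_iso {0..<n} E (insert w VH) {e \<union> {w} | e. e \<in> EH}"
    unfolding hyp_iso_def by (intro exI[of _ id]) auto
qed

lemma hdeg_cone:
  assumes sub: "\<And>e. e \<in> EH \<Longrightarrow> e \<subseteq> VH" and v: "v \<notin> VH"
  shows "hdeg {e \<union> {v} | e. e \<in> EH} v = card EH"
    and "u \<in> VH \<Longrightarrow> hdeg {e \<union> {v} | e. e \<in> EH} u = hdeg EH u"
proof -
  have inj: "inj_on (\<lambda>e. e \<union> {v}) EH"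
  proof (rule inj_onI)
    fix a b assume "a \<in> EH" "b \<in> EH" "a \<union> {v} = b \<union> {v}"
    moreover have "v \<notin> a" "v \<notin> b" using sub v \<open>a \<in> EH\<close> \<open>b \<in> EH\<close> by auto
    ultimately show "a = b" by (metis Diff_insert_absorb Un_insert_right sup_bot.right_neutral)
  qed
  have "{e'\<in>{e \<union> {v} | e. e \<in> EH}. v \<in> e'} = (\<lambda>e. e \<union> {v}) ` EH" by auto
  thus "hdeg {e \<union> {v} | e. e \<in> EH} v = card EH" using inj unfolding hdeg_def by (simp add: card_image)
  assume "u \<in> VH"
  hence "{e'\<in>{e \<union> {v} | e. e \<in> EH}. u \<in> e'} = (\<lambda>e. e \<union> {v}) ` {e\<in>EH. u\<in>e}" using v by auto
  thus "hdeg {e \<union> {v} | e. e \<in> EH} u = hdeg EH u"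
    unfolding hdeg_def using inj_on_subset[OF inj] by (simp add: card_image)
qed

lemma cone_degrees:
  fixes E :: "nat set set" and VH :: "nat set"
  assumes sub: "\<And>e. e \<in> E \<Longrightarrow> e \<subseteq> {0..<n}" and n: "n \<ge> 2"
    and uH: "uniform_hypergraph VH EH (k - 1)" and cV: "card VH = n - 1"
    and rH: "hregular VH EH" and vV: "v \<notin> VH"
    and iso: "hyp_iso {0..<n} E (insert v VH) {e \<union> {v} | e. e \<in> EH}"
  obtains u0 r where "u0 < n" "\<And>e. e \<in> E \<Longrightarrow> u0 \<in> e"
    "\<And>j. j < n \<Longrightarrow> j \<noteq> u0 \<Longrightarrow> hdeg E j = r" "r \<le> hdeg E u0"
proof -
  define E' where "E' = {e \<union> {v} | e. e \<in> EH}"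
  obtain f where inj: "inj_on f {0..<n}" and img: "f ` {0..<n} = insert v VH"
    and E': "E' = (\<lambda>e. f ` e) ` E"
    using iso unfolding hyp_iso_def E'_def bij_betw_def by blast
  have EHsub: "\<And>e. e \<in> EH \<Longrightarrow> e \<subseteq> VH" and finV: "finite VH"
    using uH unfolding uniform_hypergraph_def by auto
  have finEH: "finite EH" using finite_subset[of EH "Pow VH"] EHsub finV by auto
  obtain u0 where u0: "u0 < n" "f u0 = v" using img by (metis atLeastLessThan_iff imageE insertI1)
  have degE: "hdeg E j = hdeg E' (f j)" if "j < n" for j
    unfolding E' using hdeg_image[OF inj sub] that by simp
  have du0: "hdeg E u0 = card EH"
    using degE[OF u0(1)] u0(2) hdeg_cone(1)[OF EHsub vV] by (simp add: E'_def)
  have dVH: "hdeg E' u = hdeg EH u" if "u \<in> VH" for u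
    using hdeg_cone(2)[OF EHsub vV that] by (simp add: E'_def)
  have fVH: "f j \<in> VH" if "j < n" "j \<noteq> u0" for j
    using img inj_on_eq_iff[OF inj, of j u0] that u0 by auto
  obtain u1 where u1: "u1 \<in> VH" using cV n by fastforce
  show ?thesis
  proof
    show "u0 < n" by fact
    show "u0 \<in> e" if e: "e \<in> E" for e
    proof -
      have "f ` e \<in> E'" unfolding E' using e by auto
      then obtain e0 where "f ` e = e0 \<union> {v}" unfolding E'_def by auto
      then obtain l where l: "l \<in> e" "f l = v" by (metis UnI2 imageE singletonI)
      hence "l = u0" using inj_on_eq_iff[OF inj, of l u0] u0 sub[OF e] by auto
      thus ?thesis using l by simp
    qed
    show "hdeg E j = hdeg EH u1" if "j < n" "j \<noteq> u0" for j
      using rH fVH[OF that] u1 degE[OF that(1)] dVH[OF fVH[OF that]] unfolding hregular_def by metis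
    have "hdeg EH u1 \<le> card EH" unfolding hdeg_def by (rule card_mono[OF finEH]) auto
    thus "hdeg EH u1 \<le> hdeg E u0" using du0 by simp
  qed
qed

subsection \<open>The weighted Gershgorin bound\<close>

locale max_degree_scaling =
  fixes n k :: nat and E :: "nat set set" and \<alpha> D D' \<delta> :: real and w :: nat
  assumes k_ge_2: "k \<ge> 2" and uniform: "uniform_hypergraph {0..<n} E k"
    and alpha_nonneg: "0 \<le> \<alpha>" and alpha_less_1: "\<alpha> < 1"
    and w_less_n: "w < n" and deg_w: "real (hdeg E w) = D"
    and deg_le: "\<And>i. i < n \<Longrightarrow> i \<noteq> w \<Longrightarrow> real (hdeg E i) \<le> D'"
    and D'_ge_1: "D' \<ge> 1" and D'_le_D: "D' \<le> D"
    and delta_ge_1: "\<delta> \<ge> 1" and hpoly_root: "hpoly \<alpha> k D D' \<delta> = 0"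
begin

definition bound :: real where "bound = \<alpha> * D + (1 - \<alpha>) * D / \<delta> ^ (k - 1)"

definition weight :: "nat \<Rightarrow> real" where "weight j = (if j = w then \<delta> else 1)"

definition weighted_link :: "nat \<Rightarrow> real"
  where "weighted_link i = (\<Sum>e\<in>{e\<in>E. i\<in>e}. \<Prod>j\<in>e-{i}. weight j)"

definition scaled_row_sum :: "nat \<Rightarrow> real"
  where "scaled_row_sum i = \<alpha> * real (hdeg E i) + (1 - \<alpha>) * weighted_link i / weight i ^ (k - 1)"

lemma bound_balance: "bound = \<alpha> * D' + (1 - \<alpha>) * D' * \<delta>"
proof -
  define P where "P = \<delta> ^ (k - 1)"
  have P: "P > 0" unfolding P_def using delta_ge_1 by simp
  have "\<delta> ^ k = \<delta> * P" unfolding P_def using k_ge_2 by (cases k) auto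
  hence "(1 - \<alpha>) * D' * (\<delta> * P) + \<alpha> * (D' - D) * P - (1 - \<alpha>) * D = 0"
    using hpoly_root unfolding hpoly_def P_def by simp
  moreover have "bound * P = \<alpha> * D * P + (1 - \<alpha>) * D"
    unfolding bound_def P_def[symmetric] using P by (simp add: field_simps)
  ultimately have "bound * P = (\<alpha> * D' + (1 - \<alpha>) * D' * \<delta>) * P" by (simp add: algebra_simps)
  thus ?thesis using P by simp
qed

lemma delta_eq_1_iff: "\<delta> = 1 \<longleftrightarrow> D = D'"
proof
  assume d: "\<delta> = 1"
  have "bound = D" unfolding bound_def using d by (simp add: algebra_simps)
  moreover have "bound = D'" unfolding bound_balance using d by (simp add: algebra_simps)
  ultimately show "D = D'" by simp
next
  assume DD': "D = D'"
  hence "(1 - \<alpha>) * D * (\<delta> ^ k - 1) = 0" using hpoly_root unfolding hpoly_def by (simp add: algebra_simps)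
  hence "\<delta> ^ k = 1 ^ k" using alpha_less_1 D'_ge_1 DD' by simp
  moreover have "0 \<le> \<delta>" "0 < k" using delta_ge_1 k_ge_2 by auto
  ultimately show "\<delta> = 1" by (metis power_eq_imp_eq_base zero_le_one)
qed

lemma bound_nonneg: "bound \<ge> 0"
  unfolding bound_def using alpha_nonneg alpha_less_1 D'_ge_1 D'_le_D delta_ge_1 by simp

lemma weight_pos: "weight j > 0"
  using delta_ge_1 by (simp add: weight_def)

lemma weighted_link_w: "weighted_link w = D"
proof -
  have "weighted_link w = (\<Sum>e\<in>{e\<in>E. w\<in>e}. 1)" unfolding weighted_link_def
    by (rule sum.cong[OF refl], rule prod.neutral) (auto simp: weight_def)
  thus ?thesis using deg_w by (simp add: hdeg_def)
qed

lemma weighted_link_other: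
  assumes "i \<noteq> w"
  shows "weighted_link i = (\<Sum>e\<in>{e\<in>E. i\<in>e}. if w \<in> e then \<delta> else 1)"
  unfolding weighted_link_def
proof (rule sum.cong[OF refl])
  fix e assume "e \<in> {e\<in>E. i\<in>e}"
  hence fin: "finite (e - {i})" using uniform_hypergraphD(4)[OF uniform] by auto
  have "(\<Prod>j\<in>e-{i}. weight j) = (if w \<in> e - {i} then \<delta> else 1)"
    using prod.delta[OF fin, of w "\<lambda>_. \<delta>"] by (simp add: weight_def)
  thus "(\<Prod>j\<in>e-{i}. weight j) = (if w \<in> e then \<delta> else 1)" using assms by simp
qed

lemma scaled_row_sum_w: "scaled_row_sum w = bound"
  unfolding scaled_row_sum_def bound_def weighted_link_w using deg_w by (simp add: weight_def)

text \<open>Away from \<open>w\<close> the scaled row sum is at most \<open>\<alpha>D' + (1-\<alpha>)D'\<delta>\<close>, which equals the bound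
  because \<open>\<delta>\<close> is a root of \<open>h\<close>.\<close>

lemma scaled_row_sum_other:
  assumes i: "i < n" "i \<noteq> w"
  shows "scaled_row_sum i \<le> bound"
    and "scaled_row_sum i = bound \<Longrightarrow>
           real (hdeg E i) = D' \<and> (\<delta> > 1 \<longrightarrow> (\<forall>e\<in>E. i \<in> e \<longrightarrow> w \<in> e))"
proof -
  let ?d = "real (hdeg E i)"
  have R: "scaled_row_sum i = \<alpha> * ?d + (1 - \<alpha>) * weighted_link i"
    unfolding scaled_row_sum_def using i by (simp add: weight_def)
  have T: "weighted_link i \<le> ?d * \<delta>"
  proof -
    have "weighted_link i \<le> (\<Sum>e\<in>{e\<in>E. i\<in>e}. \<delta>)" unfolding weighted_link_other[OF i(2)]
      by (rule sum_mono) (use delta_ge_1 in auto)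
    thus ?thesis by (simp add: hdeg_def)
  qed
  have dD': "?d \<le> D'" using deg_le i by auto
  have step1: "\<alpha> * ?d + (1 - \<alpha>) * weighted_link i \<le> \<alpha> * ?d + (1 - \<alpha>) * (?d * \<delta>)"
    using T alpha_less_1 by (simp add: mult_left_mono)
  have step2: "\<alpha> * ?d + (1 - \<alpha>) * (?d * \<delta>) \<le> bound"
  proof -
    have "\<alpha> * ?d \<le> \<alpha> * D'" using dD' alpha_nonneg by (simp add: mult_left_mono)
    moreover have "(1 - \<alpha>) * (?d * \<delta>) \<le> (1 - \<alpha>) * D' * \<delta>"
      using dD' alpha_less_1 delta_ge_1 by (simp add: mult_left_mono mult_right_mono mult.assoc)
    ultimately show ?thesis unfolding bound_balance by simp
  qed
  show "scaled_row_sum i \<le> bound" using R step1 step2 by simp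
  assume eq: "scaled_row_sum i = bound"
  hence T_eq: "weighted_link i = ?d * \<delta>" and "\<alpha> * ?d + (1 - \<alpha>) * (?d * \<delta>) = bound"
    using R step1 step2 alpha_less_1 by auto
  hence "(\<alpha> + (1 - \<alpha>) * \<delta>) * (D' - ?d) = 0" unfolding bound_balance by (simp add: algebra_simps)
  moreover have "1 - \<alpha> \<le> (1 - \<alpha>) * \<delta>"
    using mult_left_mono[OF delta_ge_1, of "1 - \<alpha>"] alpha_less_1 by simp
  hence "\<alpha> + (1 - \<alpha>) * \<delta> > 0" using alpha_nonneg by linarith
  ultimately have deg: "?d = D'" by simp
  have "w \<in> e" if "\<delta> > 1" "e \<in> E" "i \<in> e" for e
  proof -
    have "(\<Sum>e\<in>{e\<in>E. i\<in>e}. if w \<in> e then \<delta> else 1) = (\<Sum>e\<in>{e\<in>E. i\<in>e}. \<delta>)"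
      using T_eq weighted_link_other[OF i(2)] by (simp add: hdeg_def)
    hence "(if w \<in> e then \<delta> else 1) = \<delta>"
      by (rule sum_mono_inv) (use delta_ge_1 that uniform_hypergraphD(1)[OF uniform] in auto)
    thus ?thesis using that(1) by (auto split: if_splits)
  qed
  thus "?d = D' \<and> (\<delta> > 1 \<longrightarrow> (\<forall>e\<in>E. i \<in> e \<longrightarrow> w \<in> e))" using deg by blast
qed

lemma scaled_row_sum_le_bound: "i < n \<Longrightarrow> scaled_row_sum i \<le> bound"
  using scaled_row_sum_w scaled_row_sum_other(1) by (cases "i = w") auto

lemma link_norm_le:
  fixes x :: "nat \<Rightarrow> complex"
  assumes Mpos: "M > 0" and Mmax: "\<And>j. j < n \<Longrightarrow> cmod (x j) \<le> weight j * M"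
  shows "(\<Sum>e\<in>{e\<in>E. i\<in>e}. \<Prod>j\<in>e-{i}. cmod (x j)) \<le> M ^ (k - 1) * weighted_link i"
    and "(\<Sum>e\<in>{e\<in>E. i\<in>e}. \<Prod>j\<in>e-{i}. cmod (x j)) = M ^ (k - 1) * weighted_link i \<Longrightarrow>
      e \<in> E \<Longrightarrow> i \<in> e \<Longrightarrow> j \<in> e \<Longrightarrow> j \<noteq> i
      \<Longrightarrow> cmod (x j) = weight j * M"
proof -
  let ?X = "\<Sum>e\<in>{e\<in>E. i\<in>e}. \<Prod>j\<in>e-{i}. cmod (x j)"
  note G = uniform_hypergraphD[OF uniform]
  have term_le: "(\<Prod>j\<in>e-{i}. cmod (x j)) \<le> (\<Prod>j\<in>e-{i}. weight j * M)" if "e \<in> E" for e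
    by (rule prod_mono) (use Mmax G(2)[OF that] in force)
  have link: "M ^ (k - 1) * weighted_link i = (\<Sum>e\<in>{e\<in>E. i\<in>e}. \<Prod>j\<in>e-{i}. weight j * M)"
    unfolding weighted_link_def sum_distrib_left
  proof (rule sum.cong[OF refl])
    fix e assume "e \<in> {e\<in>E. i\<in>e}"
    hence "card (e - {i}) = k - 1" using G by simp
    thus "M ^ (k - 1) * (\<Prod>j\<in>e-{i}. weight j) = (\<Prod>j\<in>e-{i}. weight j * M)"
      by (simp add: prod.distrib)
  qed
  show "?X \<le> M ^ (k - 1) * weighted_link i" unfolding link
    by (rule sum_mono, rule term_le) simp
  assume eq: "?X = M ^ (k - 1) * weighted_link i" and e: "e \<in> E" "i \<in> e" and j: "j \<in> e" "j \<noteq> i"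
  have "(\<Prod>j\<in>e-{i}. cmod (x j)) = (\<Prod>j\<in>e-{i}. weight j * M)"
  proof (rule sum_mono_inv[OF eq[unfolded link]])
    show "finite {e\<in>E. i\<in>e}" using G(1) by simp
    show "e \<in> {e\<in>E. i\<in>e}" using e by simp
  qed (rule term_le, simp)
  thus "cmod (x j) = weight j * M"
  proof (rule prod_mono_inv[rotated 3])
    show "finite (e - {i})" using G(4)[OF e(1)] by simp
    show "0 \<le> cmod (x l) \<and> cmod (x l) \<le> weight l * M" if "l \<in> e - {i}" for l
      using Mmax G(2)[OF e(1)] that by auto
    show "0 < weight l * M" for l using weight_pos Mpos by simp
  qed (use j in auto)
qed

lemma eigenvalue_le_scaled_row_sum:
  fixes x :: "nat \<Rightarrow> complex"
  assumes ev: "\<And>i. i < n \<Longrightarrow> tensor_apply n k (A_alpha \<alpha> k E) x i = lam * x i ^ (k - 1)"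
    and Mpos: "M > 0" and Mmax: "\<And>j. j < n \<Longrightarrow> cmod (x j) \<le> weight j * M"
    and i: "i < n" and xi: "cmod (x i) = weight i * M"
  shows "cmod lam \<le> scaled_row_sum i"
    and "cmod lam = scaled_row_sum i \<Longrightarrow>
      (\<Sum>e\<in>{e\<in>E. i\<in>e}. \<Prod>j\<in>e-{i}. cmod (x j)) = M ^ (k - 1) * weighted_link i"
proof -
  let ?d = "real (hdeg E i)" and ?X = "\<Sum>e\<in>{e\<in>E. i\<in>e}. \<Prod>j\<in>e-{i}. cmod (x j)"
  define c where "c = (weight i * M) ^ (k - 1)"
  have c: "c > 0" unfolding c_def using weight_pos Mpos by simp
  have "(lam - of_real (\<alpha> * ?d)) * x i ^ (k - 1) = of_real (1 - \<alpha>) * (\<Sum>e\<in>{e\<in>E. i\<in>e}. \<Prod>j\<in>e-{i}. x j)"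
    using ev[OF i] tensor_apply_A_alpha[OF k_ge_2 uniform i, of \<alpha> x] by (simp add: algebra_simps)
  hence "cmod ((lam - of_real (\<alpha> * ?d)) * x i ^ (k - 1))
      = cmod (of_real (1 - \<alpha>) * (\<Sum>e\<in>{e\<in>E. i\<in>e}. \<Prod>j\<in>e-{i}. x j))" by (rule arg_cong)
  moreover have "cmod (complex_of_real (1 - \<alpha>)) = 1 - \<alpha>"
    unfolding norm_of_real using alpha_less_1 by simp
  ultimately have "cmod (lam - of_real (\<alpha> * ?d)) * c
      = (1 - \<alpha>) * cmod (\<Sum>e\<in>{e\<in>E. i\<in>e}. \<Prod>j\<in>e-{i}. x j)"
    unfolding norm_mult norm_power xi c_def by simp
  also have "\<dots> \<le> (1 - \<alpha>) * ?X"
  proof -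
    have "cmod (\<Sum>e\<in>{e\<in>E. i\<in>e}. \<Prod>j\<in>e-{i}. x j) \<le> ?X"
      by (rule order_trans[OF norm_sum]) (simp add: prod_norm[symmetric])
    thus ?thesis using alpha_less_1 by (simp add: mult_left_mono)
  qed
  finally have eigen: "cmod (lam - of_real (\<alpha> * ?d)) \<le> (1 - \<alpha>) * ?X / c"
    using c by (simp add: pos_le_divide_eq)
  have triangle: "cmod lam \<le> \<alpha> * ?d + cmod (lam - of_real (\<alpha> * ?d))"
    using norm_triangle_ineq[of "of_real (\<alpha> * ?d)" "lam - of_real (\<alpha> * ?d)"] alpha_nonneg
    by (simp add: norm_mult)
  have link: "(1 - \<alpha>) * ?X / c \<le> (1 - \<alpha>) * (M ^ (k - 1) * weighted_link i) / c"
    using link_norm_le(1)[OF Mpos Mmax] c alpha_less_1 by (simp add: divide_right_mono)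
  have R: "scaled_row_sum i = \<alpha> * ?d + (1 - \<alpha>) * (M ^ (k - 1) * weighted_link i) / c"
    unfolding scaled_row_sum_def c_def using Mpos by (simp add: power_mult_distrib)
  show "cmod lam \<le> scaled_row_sum i" using triangle eigen link R by linarith
  assume "cmod lam = scaled_row_sum i"
  hence "(1 - \<alpha>) * ?X / c = (1 - \<alpha>) * (M ^ (k - 1) * weighted_link i) / c"
    using triangle eigen link R by linarith
  thus "?X = M ^ (k - 1) * weighted_link i" using c alpha_less_1 by simp
qed

lemma eigenvector_weighted_max:
  assumes "tensor_eigenvalue n k (A_alpha \<alpha> k E) lam"
  obtains x M i where "\<And>i. i < n \<Longrightarrow> tensor_apply n k (A_alpha \<alpha> k E) x i = lam * x i ^ (k - 1)"
    "M > 0" "\<And>j. j < n \<Longrightarrow> cmod (x j) \<le> weight j * M" "i < n" "cmod (x i) = weight i * M"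
proof -
  from assms obtain x i0 where ev: "\<And>i. i < n \<Longrightarrow> tensor_apply n k (A_alpha \<alpha> k E) x i = lam * x i ^ (k - 1)"
    and i0: "i0 < n" "x i0 \<noteq> 0" unfolding tensor_eigenvalue_def by blast
  define M where "M = Max ((\<lambda>j. cmod (x j) / weight j) ` {..<n})"
  obtain i where i: "i < n" "cmod (x i) / weight i = M"
    using Max_in[of "(\<lambda>j. cmod (x j) / weight j) ` {..<n}"] i0 unfolding M_def by fastforce
  have ge: "cmod (x j) / weight j \<le> M" if "j < n" for j unfolding M_def
    by (rule Max_ge) (use that in auto)
  have "0 < cmod (x i0) / weight i0" using i0(2) weight_pos[of i0] by simp
  hence "M > 0" using ge[OF i0(1)] by linarith
  show ?thesis
  proof (rule that[OF ev \<open>M > 0\<close> _ i(1)])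
    show "cmod (x j) \<le> weight j * M" if "j < n" for j
      using ge[OF that] weight_pos[of j] by (simp add: divide_le_eq mult.commute)
    show "cmod (x i) = weight i * M" using i(2) weight_pos[of i] by (simp add: field_simps)
  qed
qed

lemma eigenvalue_le_bound:
  assumes "tensor_eigenvalue n k (A_alpha \<alpha> k E) lam"
  shows "cmod lam \<le> bound"
proof -
  obtain x M i where "\<And>i. i < n \<Longrightarrow> tensor_apply n k (A_alpha \<alpha> k E) x i = lam * x i ^ (k - 1)"
    "M > 0" "\<And>j. j < n \<Longrightarrow> cmod (x j) \<le> weight j * M" "i < n" "cmod (x i) = weight i * M"
    using eigenvector_weighted_max[OF assms] by blast
  from eigenvalue_le_scaled_row_sum(1)[OF this] scaled_row_sum_le_bound[OF \<open>i < n\<close>] show ?thesis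
    by linarith
qed

text \<open>If the bound is attained, the set of vertices where \<open>|x\<^sub>j| = s\<^sub>j M\<close> is closed under
  passing through edges, so by connectivity the Gershgorin estimate is tight at every vertex.\<close>

lemma scaled_row_sum_eq_bound_if_attained:
  assumes ev: "tensor_eigenvalue n k (A_alpha \<alpha> k E) lam" and lb: "cmod lam = bound"
    and con: "hconnected {0..<n} E" and u: "u < n"
  shows "scaled_row_sum u = bound"
proof -
  obtain x M i where ev': "\<And>i. i < n \<Longrightarrow> tensor_apply n k (A_alpha \<alpha> k E) x i = lam * x i ^ (k - 1)"
    and M: "M > 0" "\<And>j. j < n \<Longrightarrow> cmod (x j) \<le> weight j * M"
    and i: "i < n" "cmod (x i) = weight i * M"
    using eigenvector_weighted_max[OF ev] by blast
  have tight: "scaled_row_sum l = bound \<and>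
      (\<Sum>e\<in>{e\<in>E. l\<in>e}. \<Prod>j\<in>e-{l}. cmod (x j)) = M ^ (k - 1) * weighted_link l"
    if "l < n" "cmod (x l) = weight l * M" for l
    using eigenvalue_le_scaled_row_sum[OF ev' M that] scaled_row_sum_le_bound[OF that(1)] lb
    by linarith
  let ?S = "{j. j < n \<and> cmod (x j) = weight j * M}"
  have "u \<in> ?S"
  proof (rule hconnected_edge_closed[OF con _ _ _])
    fix l e j assume "l \<in> ?S" "e \<in> E" "l \<in> e" "j \<in> e"
    thus "j \<in> ?S" using link_norm_le(2)[OF M conjunct2[OF tight]] uniform_hypergraphD(2)[OF uniform]
      by (cases "j = l") fastforce+
  qed (use i u in auto)
  thus ?thesis using tight by blast
qed

lemma deg_le_D: "i < n \<Longrightarrow> real (hdeg E i) \<le> D"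
  using deg_le deg_w D'_le_D by (cases "i = w") force+

lemma attained_bound_imp_regular_or_cone:
  assumes con: "hconnected {0..<n} E"
    and ev: "tensor_eigenvalue n k (A_alpha \<alpha> k E) lam" and lb: "cmod lam = bound"
  shows "hregular {0..<n} E \<or>
    (\<exists>(VH :: nat set) EH v. uniform_hypergraph VH EH (k - 1) \<and> card VH = n - 1 \<and>
       hregular VH EH \<and> v \<notin> VH \<and> hyp_iso {0..<n} E (insert v VH) {e \<union> {v} | e. e \<in> EH})"
proof -
  have tight: "real (hdeg E j) = D' \<and> (\<delta> > 1 \<longrightarrow> (\<forall>e\<in>E. j \<in> e \<longrightarrow> w \<in> e))"
    if "j < n" "j \<noteq> w" for j
    using scaled_row_sum_other(2)[OF that scaled_row_sum_eq_bound_if_attained[OF ev lb con that(1)]] .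
  show ?thesis
  proof (cases "\<delta> = 1")
    case True
    hence "real (hdeg E j) = D" if "j < n" for j
      using tight[OF that] deg_w delta_eq_1_iff by (cases "j = w") auto
    hence "hregular {0..<n} E" unfolding hregular_def by (metis atLeastLessThan_iff of_nat_eq_iff)
    thus ?thesis ..
  next
    case False
    hence "\<delta> > 1" using delta_ge_1 by simp
    have cone: "w \<in> e" if e: "e \<in> E" for e
    proof -
      have "\<not> e \<subseteq> {w}"
        using card_mono[of "{w}" e] uniform_hypergraphD(3)[OF uniform e] k_ge_2 by auto
      then obtain j where "j \<in> e" "j \<noteq> w" by auto
      thus ?thesis using tight[of j] \<open>\<delta> > 1\<close> e uniform_hypergraphD(2)[OF uniform e] by auto
    qed
    note link = cone_over_link[OF uniform w_less_n cone]
    have "hregular ({0..<n} - {w}) ((\<lambda>e. e - {w}) ` E)"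
    proof (unfold hregular_def, intro ballI)
      fix u u' assume "u \<in> {0..<n} - {w}" "u' \<in> {0..<n} - {w}"
      hence "real (hdeg ((\<lambda>e. e - {w}) ` E) u) = D'" "real (hdeg ((\<lambda>e. e - {w}) ` E) u') = D'"
        using link(4) tight by auto
      thus "hdeg ((\<lambda>e. e - {w}) ` E) u = hdeg ((\<lambda>e. e - {w}) ` E) u'" by simp
    qed
    thus ?thesis using link(1,2,3,5) by blast
  qed
qed

lemma cone_eigenvalue:
  assumes u0: "u0 < n" and cone: "\<And>e. e \<in> E \<Longrightarrow> u0 \<in> e" and deg_u0: "real (hdeg E u0) = D"
    and deg_other: "\<And>j. j < n \<Longrightarrow> j \<noteq> u0 \<Longrightarrow> real (hdeg E j) = D'"
  shows "tensor_eigenvalue n k (A_alpha \<alpha> k E) (of_real bound)"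
proof -
  define x where "x j = (if j = u0 then \<delta> else 1)" for j
  have P: "\<delta> ^ (k - 1) > 0" using delta_ge_1 by simp
  show ?thesis
  proof (rule real_eigenvector_imp_eigenvalue[OF k_ge_2 uniform _ u0, where x = x])
    show "x u0 \<noteq> 0" using delta_ge_1 by (simp add: x_def)
    fix i assume i: "i < n"
    show "\<alpha> * real (hdeg E i) * x i ^ (k - 1) + (1 - \<alpha>) * (\<Sum>e\<in>{e\<in>E. i\<in>e}. \<Prod>l\<in>e-{i}. x l)
        = bound * x i ^ (k - 1)"
    proof (cases "i = u0")
      case True
      have "(\<Sum>e\<in>{e\<in>E. i\<in>e}. \<Prod>l\<in>e-{i}. x l) = (\<Sum>e\<in>{e\<in>E. i\<in>e}. 1)"
        by (rule sum.cong[OF refl], rule prod.neutral) (use True in \<open>auto simp: x_def\<close>)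
      also have "\<dots> = D" using True deg_u0 by (simp add: hdeg_def)
      moreover have "bound * \<delta> ^ (k - 1) = \<alpha> * D * \<delta> ^ (k - 1) + (1 - \<alpha>) * D"
        unfolding bound_def using P delta_ge_1 by (simp add: distrib_right)
      ultimately show ?thesis using True deg_u0 by (simp add: x_def)
    next
      case False
      have "(\<Sum>e\<in>{e\<in>E. i\<in>e}. \<Prod>l\<in>e-{i}. x l) = (\<Sum>e\<in>{e\<in>E. i\<in>e}. \<delta>)"
      proof (rule sum.cong[OF refl])
        fix e assume e: "e \<in> {e\<in>E. i\<in>e}"
        hence "finite (e - {i})" "u0 \<in> e - {i}"
          using uniform_hypergraphD(4)[OF uniform] cone False by auto
        thus "(\<Prod>l\<in>e-{i}. x l) = \<delta>" unfolding x_def using prod.delta[of "e - {i}" u0 "\<lambda>_. \<delta>"] by simp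
      qed
      also have "\<dots> = D' * \<delta>" using deg_other[OF i False] by (simp add: hdeg_def)
      finally show ?thesis using False deg_other[OF i False] unfolding bound_balance by (simp add: x_def)
    qed
  qed
qed

lemma regular_bound_eigenvalue:
  assumes q: "q < n" "real (hdeg E q) = D'" and reg: "hregular {0..<n} E"
  shows "tensor_eigenvalue n k (A_alpha \<alpha> k E) (of_real bound)"
proof -
  have deg: "real (hdeg E j) = D" if "j < n" for j
  proof -
    have "j \<in> {0..<n}" "w \<in> {0..<n}" using that w_less_n by auto
    hence "hdeg E j = hdeg E w" using reg unfolding hregular_def by blast
    thus ?thesis using deg_w by simp
  qed
  have "D = D'" using deg[OF q(1)] q(2) by simp
  hence "\<delta> = 1" using delta_eq_1_iff by simp
  hence "bound = D" unfolding bound_def by (simp add: algebra_simps)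
  moreover have "tensor_eigenvalue n k (A_alpha \<alpha> k E) (of_real D)"
  proof (rule real_eigenvector_imp_eigenvalue[OF k_ge_2 uniform _ w_less_n, where x = "\<lambda>_. 1"])
    fix i assume "i < n"
    have "(\<Sum>e\<in>{e\<in>E. i\<in>e}. \<Prod>l\<in>e-{i}. (1::real)) = real (hdeg E i)" by (simp add: hdeg_def)
    thus "\<alpha> * real (hdeg E i) * 1 ^ (k - 1) + (1 - \<alpha>) * (\<Sum>e\<in>{e\<in>E. i\<in>e}. \<Prod>l\<in>e-{i}. (1::real))
        = D * 1 ^ (k - 1)"
      using deg[OF \<open>i < n\<close>] by (simp add: algebra_simps)
  qed simp
  ultimately show ?thesis by simp
qed

lemma cone_bound_eigenvalue:
  fixes VH :: "nat set"
  assumes q: "q < n" "q \<noteq> w" "real (hdeg E q) = D'"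
    and cone: "uniform_hypergraph VH EH (k - 1)" "card VH = n - 1" "hregular VH EH" "v \<notin> VH"
      "hyp_iso {0..<n} E (insert v VH) {e \<union> {v} | e. e \<in> EH}"
  shows "tensor_eigenvalue n k (A_alpha \<alpha> k E) (of_real bound)"
proof -
  have "n \<ge> 2" using q w_less_n by linarith
  then obtain u0 r where u0: "u0 < n" "\<And>e. e \<in> E \<Longrightarrow> u0 \<in> e"
    and r: "\<And>j. j < n \<Longrightarrow> j \<noteq> u0 \<Longrightarrow> hdeg E j = r" "r \<le> hdeg E u0"
    using cone_degrees[OF uniform_hypergraphD(2)[OF uniform] _ cone] by blast
  have deg_u0: "real (hdeg E u0) = D"
  proof (cases "w = u0")
    case False
    hence "D \<le> real (hdeg E u0)" using r(1)[OF w_less_n False] r(2) deg_w by simp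
    thus ?thesis using deg_le_D[OF u0(1)] by simp
  qed (use deg_w in simp)
  have "real r = D'"
  proof (cases "q = u0")
    case True
    hence "real r = D" using q(2) r(1)[OF w_less_n] deg_w by simp
    thus ?thesis using q(3) True deg_u0 by simp
  qed (use q r(1)[OF q(1)] in simp)
  thus ?thesis using cone_eigenvalue[OF u0 deg_u0] r(1) by simp
qed

lemma regular_or_cone_imp_attained:
  assumes q: "q < n" "q \<noteq> w" "real (hdeg E q) = D'"
    and H: "hregular {0..<n} E \<or>
      (\<exists>(VH :: nat set) EH v. uniform_hypergraph VH EH (k - 1) \<and> card VH = n - 1 \<and>
         hregular VH EH \<and> v \<notin> VH \<and> hyp_iso {0..<n} E (insert v VH) {e \<union> {v} | e. e \<in> EH})"
  shows "\<exists>lam. tensor_eigenvalue n k (A_alpha \<alpha> k E) lam \<and> cmod lam = bound"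
proof -
  have "tensor_eigenvalue n k (A_alpha \<alpha> k E) (of_real bound)"
    using H regular_bound_eigenvalue[OF q(1,3)] cone_bound_eigenvalue[OF q] by blast
  thus ?thesis using bound_nonneg by (intro exI[of _ "of_real bound"]) simp
qed

lemma rho_alpha_attained:
  obtains lam where "tensor_eigenvalue n k (A_alpha \<alpha> k E) lam" "cmod lam = rho_alpha \<alpha> n k E"
    "\<And>\<mu>. tensor_eigenvalue n k (A_alpha \<alpha> k E) \<mu> \<Longrightarrow> cmod \<mu> \<le> rho_alpha \<alpha> n k E"
proof -
  obtain lam0 where lam0: "tensor_eigenvalue n k (A_alpha \<alpha> k E) lam0"
    by (rule A_alpha_has_eigenvalue[OF k_ge_2 uniform]) (use w_less_n in simp)
  obtain lam where "tensor_eigenvalue n k (A_alpha \<alpha> k E) lam"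
    "cmod lam = tensor_spectral_radius n k (A_alpha \<alpha> k E)"
    "\<And>\<mu>. tensor_eigenvalue n k (A_alpha \<alpha> k E) \<mu> \<Longrightarrow> cmod \<mu> \<le> tensor_spectral_radius n k (A_alpha \<alpha> k E)"
    using tensor_spectral_radius_attained[OF eigenvalue_le_bound lam0] by blast
  thus ?thesis using that unfolding rho_alpha_def by blast
qed

lemma rho_alpha_le_bound: "rho_alpha \<alpha> n k E \<le> bound"
proof -
  obtain lam where "tensor_eigenvalue n k (A_alpha \<alpha> k E) lam" "cmod lam = rho_alpha \<alpha> n k E"
    by (rule rho_alpha_attained)
  thus ?thesis using eigenvalue_le_bound[of lam] by simp
qed

lemma rho_alpha_eq_bound_iff:
  assumes con: "hconnected {0..<n} E" and q: "q < n" "q \<noteq> w" "real (hdeg E q) = D'"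
  shows "rho_alpha \<alpha> n k E = bound \<longleftrightarrow> hregular {0..<n} E \<or>
    (\<exists>(VH :: nat set) EH v. uniform_hypergraph VH EH (k - 1) \<and> card VH = n - 1 \<and>
       hregular VH EH \<and> v \<notin> VH \<and> hyp_iso {0..<n} E (insert v VH) {e \<union> {v} | e. e \<in> EH})"
    (is "_ \<longleftrightarrow> _ \<or> ?cone")
proof -
  obtain lam where lam: "tensor_eigenvalue n k (A_alpha \<alpha> k E) lam" "cmod lam = rho_alpha \<alpha> n k E"
    and le: "\<And>\<mu>. tensor_eigenvalue n k (A_alpha \<alpha> k E) \<mu> \<Longrightarrow> cmod \<mu> \<le> rho_alpha \<alpha> n k E"
    using rho_alpha_attained by blast
  show ?thesis
  proof
    assume "rho_alpha \<alpha> n k E = bound"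
    thus "hregular {0..<n} E \<or> ?cone" using attained_bound_imp_regular_or_cone[OF con lam(1)] lam(2) by simp
  next
    assume "hregular {0..<n} E \<or> ?cone"
    then obtain \<mu> where "tensor_eigenvalue n k (A_alpha \<alpha> k E) \<mu>" "cmod \<mu> = bound"
      using regular_or_cone_imp_attained[OF q] by blast
    thus "rho_alpha \<alpha> n k E = bound" using le rho_alpha_le_bound by fastforce
  qed
qed

end

lemma delta_choice:
  fixes \<alpha> D D' \<delta> :: real
  assumes k: "k \<ge> 1" and \<alpha>: "0 \<le> \<alpha>" and D': "0 < D'" "D' \<le> D"
    and h0: "\<alpha> = 0 \<Longrightarrow> \<delta> = (D / D') powr (1 / real k)"
    and h1: "0 < \<alpha> \<Longrightarrow> D = D' \<Longrightarrow> \<delta> = 1"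
    and h2: "0 < \<alpha> \<Longrightarrow> D > D' \<Longrightarrow> \<delta> > (D / D') powr (1 / real k) \<and> hpoly \<alpha> k D D' \<delta> = 0"
  shows "\<delta> \<ge> 1" and "hpoly \<alpha> k D D' \<delta> = 0"
proof -
  define r where "r = D / D'"
  have r: "r \<ge> 1" unfolding r_def using D' by simp
  have root_ge_1: "r powr (1 / real k) \<ge> 1" using r by (simp add: ge_one_powr_ge_zero)
  have "\<delta> \<ge> 1 \<and> hpoly \<alpha> k D D' \<delta> = 0"
  proof (cases "\<alpha> = 0")
    case True
    have "(r powr (1 / real k)) ^ k = (r powr (1 / real k)) powr real k"
      using r by (simp add: powr_realpow)
    also have "\<dots> = r" using k r by (simp add: powr_powr)
    finally have "hpoly \<alpha> k D D' \<delta> = D' * r - D" unfolding hpoly_def h0[OF True] r_def[symmetric]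
      using True by simp
    thus ?thesis using D' root_ge_1 h0[OF True] unfolding r_def by simp
  next
    case False
    hence "0 < \<alpha>" using \<alpha> by simp
    thus ?thesis
      using h1 h2 D'(2) root_ge_1 unfolding r_def by (cases "D = D'") (auto simp: hpoly_def)
  qed
  thus "\<delta> \<ge> 1" and "hpoly \<alpha> k D D' \<delta> = 0" by simp_all
qed

theorem theorem3p1:
  fixes n k :: nat and E :: "nat set set" and \<alpha> \<delta> :: real
  assumes hk: "k \<ge> 2" and hn: "n \<ge> 2"
    and hG: "uniform_hypergraph {0..<n} E k"
    and h\<alpha>: "0 \<le> \<alpha>" "\<alpha> < 1"
  defines "\<Delta> \<equiv> real (sorted_degrees n E ! 0)"
    and "\<Delta>' \<equiv> real (sorted_degrees n E ! 1)"
  assumes h\<Delta>': "\<Delta>' \<ge> 1"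
    and h\<delta>0: "\<alpha> = 0 \<Longrightarrow> \<delta> = (\<Delta> / \<Delta>') powr (1 / real k)"
    and h\<delta>1: "0 < \<alpha> \<Longrightarrow> \<Delta> = \<Delta>' \<Longrightarrow> \<delta> = 1"
    and h\<delta>2: "0 < \<alpha> \<Longrightarrow> \<Delta> > \<Delta>' \<Longrightarrow> \<delta> > (\<Delta> / \<Delta>') powr (1 / real k) \<and> hpoly \<alpha> k \<Delta> \<Delta>' \<delta> = 0"
  shows "(0 < \<alpha> \<and> \<Delta> > \<Delta>' \<longrightarrow> (\<exists>t. t > (\<Delta> / \<Delta>') powr (1 / real k) \<and> hpoly \<alpha> k \<Delta> \<Delta>' t = 0))
       \<and> rho_alpha \<alpha> n k E \<le> \<alpha> * \<Delta> + (1 - \<alpha>) * \<Delta> / \<delta> ^ (k - 1)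
       \<and> (hconnected {0..<n} E \<longrightarrow>
           (rho_alpha \<alpha> n k E = \<alpha> * \<Delta> + (1 - \<alpha>) * \<Delta> / \<delta> ^ (k - 1) \<longleftrightarrow>
              hregular {0..<n} E \<or>
              (\<exists>(VH :: nat set) EH v. uniform_hypergraph VH EH (k - 1) \<and> card VH = n - 1 \<and>
                  hregular VH EH \<and> v \<notin> VH \<and>
                  hyp_iso {0..<n} E (insert v VH) {e \<union> {v} | e. e \<in> EH})))"
proof -
  obtain p q where pq: "p < n" "q < n" "p \<noteq> q"
    "hdeg E p = sorted_degrees n E ! 0" "hdeg E q = sorted_degrees n E ! 1"
    "\<And>i. i < n \<Longrightarrow> hdeg E i \<le> sorted_degrees n E ! 0"
    "\<And>i. i < n \<Longrightarrow> i \<noteq> p \<Longrightarrow> hdeg E i \<le> sorted_degrees n E ! 1"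
    using sorted_degrees_witnesses[OF hn] by blast
  have "\<Delta>' \<le> \<Delta>" using pq(6)[OF pq(2)] pq(5) unfolding \<Delta>_def \<Delta>'_def by simp
  moreover have "0 < \<Delta>'" using h\<Delta>' by simp
  ultimately have \<delta>: "\<delta> \<ge> 1" "hpoly \<alpha> k \<Delta> \<Delta>' \<delta> = 0"
    using delta_choice[of k \<alpha> \<Delta>' \<Delta> \<delta>] hk h\<alpha>(1) h\<delta>0 h\<delta>1 h\<delta>2 by auto
  interpret max_degree_scaling n k E \<alpha> \<Delta> \<Delta>' \<delta> p
    by unfold_locales (use hk hG h\<alpha> pq h\<Delta>' \<delta> \<open>\<Delta>' \<le> \<Delta>\<close> in \<open>auto simp: \<Delta>_def \<Delta>'_def\<close>)
  have "bound = \<alpha> * \<Delta> + (1 - \<alpha>) * \<Delta> / \<delta> ^ (k - 1)" by (rule bound_def)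
  moreover have "real (hdeg E q) = \<Delta>'" using pq(5) unfolding \<Delta>'_def by simp
  ultimately show ?thesis
    using h\<delta>2 rho_alpha_le_bound rho_alpha_eq_bound_iff[OF _ pq(2) pq(3)[symmetric]] by auto
qed

end
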